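(* Let $\underline{p}\in\Theta$, $\delta>0$, and $\underline{v}\in\mathbb{R}^S$ with $v_{x_1}\neq v_{x_2}$ for some $x_1,x_2\in S$. Then $C(\underline{p},\underline{v},\delta)=\mu_q^*$, where $(\mu_q^*,\lambda)\in\mathbb{R}^2$ satisfies the system $$\sum_{x\in S}p_x\ln\Big(1+\frac{v_x-\mu_q^*}{\lambda}\Big)=\delta,\qquad \sum_{x\in S}p_x\frac{\lambda}{\lambda+v_x-\mu_q^*}=1,$$ together with $\mu_p<\mu_q^*<V$ and $\lambda<\mu_q^*-V$.
   Context: $S$ is a finite set and $\Theta=\{\underline{q}\in\mathbb{R}^{S}:\sum_{y\in S}q_y=1,\ q_y>0\ \forall y\in S\}$ is the set of strictly positive probability vectors on $S$. The Kullback–Leibler divergence is $\mathbf{I}(\underline{p},\underline{q})=\sum_{x\in S}p_x\ln(p_x/q_x)$. For $\underline{p}\in\Theta$, $\underline{v}\in\mathbb{R}^S$, $\delta\in\mathbb{R}$, define $C(\underline{p},\underline{v},\delta)=\sup_{\underline{q}\in\Theta}\{\sum_{x\in S}q_xv_x:\mathbf{I}(\underline{p},\underline{q})\le\delta\}$. Write $\mu_p=\sum_{x\in S}p_xv_x$ and $V=\max_{x\in S}v_x$. *)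

theory Defs
  imports Complex_Main
begin

text \<open>S is modelled by a finite type 'a; vectors in R^S are functions 'a => real.\<close>

definition Theta :: "('a::finite \<Rightarrow> real) set" where
  "Theta = {q. (\<Sum>y\<in>UNIV. q y) = 1 \<and> (\<forall>y. q y > 0)}"

definition KL :: "('a::finite \<Rightarrow> real) \<Rightarrow> ('a \<Rightarrow> real) \<Rightarrow> real" where
  "KL p q = (\<Sum>x\<in>UNIV. p x * ln (p x / q x))"

definition Cval :: "('a::finite \<Rightarrow> real) \<Rightarrow> ('a \<Rightarrow> real) \<Rightarrow> real \<Rightarrow> real" where
  "Cval p v \<delta> = Sup {(\<Sum>x\<in>UNIV. q x * v x) | q. q \<in> Theta \<and> KL p q \<le> \<delta>}"

definition solves_sys :: "('a::finite \<Rightarrow> real) \<Rightarrow> ('a \<Rightarrow> real) \<Rightarrow> real \<Rightarrow> real \<Rightarrow> real \<Rightarrow> bool" where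
  "solves_sys p v \<delta> mu lam \<longleftrightarrow>
     (\<Sum>x\<in>UNIV. p x * ln (1 + (v x - mu) / lam)) = \<delta> \<and>
     (\<Sum>x\<in>UNIV. p x * (lam / (lam + v x - mu))) = 1 \<and>
     (\<Sum>x\<in>UNIV. p x * v x) < mu \<and> mu < Max (range v) \<and>
     lam < mu - Max (range v)"

end

theory Submission
  imports Defs
begin

text \<open>
  Upper bound: for every positive weight function \<open>b\<close> with \<open>\<Sum> p ln b = \<delta>\<close>, the elementary
  inequality \<open>ln t \<le> t - 1\<close> gives \<open>\<Sum> q b \<ge> 1 + \<delta> - KL p q\<close>.  Taking
  \<open>b = 1 + (v - \<mu>)/\<lambda>\<close> with \<open>\<lambda> < 0\<close> turns this into \<open>\<Sum> q v \<le> \<mu>\<close> on the feasible set, and the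
  tilted distribution \<open>q = p \<lambda> / (\<lambda> + v - \<mu>)\<close> is feasible with mean \<open>\<mu>\<close>.

  Existence: with \<open>s = \<mu> - \<lambda> > V\<close> and \<open>R(s) = \<Sum> p / (s - v)\<close>, the second equation forces
  \<open>\<lambda> = -1/R(s)\<close>, and the first becomes \<open>D(s) = \<Sum> p ln (s - v) + ln R(s) = \<delta>\<close>.  \<open>D\<close> is continuous
  on \<open>(V, \<infinity>)\<close>, blows up as \<open>s \<rightarrow> V\<close> and tends to \<open>0\<close> as \<open>s \<rightarrow> \<infinity>\<close>, so a root exists; the
  strict inequalities then follow from the strict AM-HM inequality and from \<open>R(s) < 1/(s - V)\<close>,
  both strict because \<open>v\<close> is not constant.
\<close>

lemma Theta_pos: "q \<in> Theta \<Longrightarrow> q x > 0"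
  unfolding Theta_def by auto

lemma Theta_sum: "q \<in> Theta \<Longrightarrow> (\<Sum>x\<in>UNIV. q x) = 1"
  unfolding Theta_def by auto

lemma le_Max_range: "(v :: 'a::finite \<Rightarrow> real) x \<le> Max (range v)"
  by (rule Max_ge) auto

lemma Min_range_le: "Min (range v) \<le> (v :: 'a::finite \<Rightarrow> real) x"
  by (rule Min_le) auto

lemma Max_range_attained: "\<exists>x. (v :: 'a::finite \<Rightarrow> real) x = Max (range v)"
proof -
  have "Max (range v) \<in> range v" by (rule Max_in) auto
  then show ?thesis by (metis rangeE)
qed

lemma nonconstant_below_Max:
  fixes v :: "'a::finite \<Rightarrow> real"
  assumes "\<exists>x1 x2. v x1 \<noteq> v x2"
  shows "\<exists>x. v x < Max (range v)"
  using assms le_Max_range[of v] by (metis order_less_le)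

subsection \<open>The variational upper bound\<close>

lemma sum_ln_weight_minus_KL_le:
  fixes p q b :: "'a::finite \<Rightarrow> real"
  assumes p: "\<And>x. p x > 0" and p_sum: "(\<Sum>x\<in>UNIV. p x) = 1"
    and q: "\<And>x. q x > 0" and b: "\<And>x. b x > 0"
  shows "(\<Sum>x\<in>UNIV. p x * ln (b x)) - KL p q \<le> (\<Sum>x\<in>UNIV. q x * b x) - 1"
proof -
  have "p x * ln (b x) - p x * ln (p x / q x) \<le> q x * b x - p x" for x
  proof -
    have pos: "q x * b x / p x > 0" using p q b by simp
    have "p x * ln (b x) - p x * ln (p x / q x) = p x * ln (q x * b x / p x)"
      using p[of x] q[of x] b[of x] by (simp add: ln_div ln_mult algebra_simps)
    also have "\<dots> \<le> p x * (q x * b x / p x - 1)"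
      using ln_le_minus_one[OF pos] p[of x] by (simp add: mult_left_mono)
    also have "\<dots> = q x * b x - p x"
      using p[of x] by (simp add: field_simps)
    finally show ?thesis .
  qed
  then have "(\<Sum>x\<in>UNIV. p x * ln (b x) - p x * ln (p x / q x)) \<le> (\<Sum>x\<in>UNIV. q x * b x - p x)"
    by (rule sum_mono)
  then show ?thesis
    by (simp add: sum_subtractf p_sum KL_def)
qed

subsection \<open>Optimality of the tilted distribution\<close>

definition tilted :: "('a::finite \<Rightarrow> real) \<Rightarrow> ('a \<Rightarrow> real) \<Rightarrow> real \<Rightarrow> real \<Rightarrow> 'a \<Rightarrow> real" where
  "tilted p v mu lam x = p x * (lam / (lam + v x - mu))"

lemma solves_sys_lam_neg: "solves_sys p v \<delta> mu lam \<Longrightarrow> lam < 0"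
  unfolding solves_sys_def by linarith

lemma solves_sys_gap_neg: "solves_sys p v \<delta> mu lam \<Longrightarrow> lam + v x - mu < 0"
  using le_Max_range[of v x] unfolding solves_sys_def by linarith

lemma tilted_in_Theta:
  assumes "p \<in> Theta" and sol: "solves_sys p v \<delta> mu lam"
  shows "tilted p v mu lam \<in> Theta"
proof -
  have "tilted p v mu lam x > 0" for x
    unfolding tilted_def using Theta_pos[OF assms(1)] solves_sys_lam_neg[OF sol]
      solves_sys_gap_neg[OF sol] by (intro mult_pos_pos divide_neg_neg)
  moreover have "(\<Sum>x\<in>UNIV. tilted p v mu lam x) = 1"
    using sol unfolding solves_sys_def tilted_def by simp
  ultimately show ?thesis unfolding Theta_def by auto
qed

lemma KL_tilted:
  assumes "p \<in> Theta" and sol: "solves_sys p v \<delta> mu lam"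
  shows "KL p (tilted p v mu lam) = \<delta>"
proof -
  have "p x / tilted p v mu lam x = 1 + (v x - mu) / lam" for x
    using Theta_pos[OF assms(1), of x] solves_sys_lam_neg[OF sol] solves_sys_gap_neg[OF sol, of x]
    unfolding tilted_def by (simp add: field_simps)
  then show ?thesis
    using sol unfolding KL_def solves_sys_def by simp
qed

lemma mean_tilted:
  assumes "p \<in> Theta" and sol: "solves_sys p v \<delta> mu lam"
  shows "(\<Sum>x\<in>UNIV. tilted p v mu lam x * v x) = mu"
proof -
  let ?q = "tilted p v mu lam"
  have "?q x * v x = ?q x * mu + lam * p x - lam * ?q x" for x
  proof -
    have "?q x * (lam + v x - mu) = p x * lam"
      using solves_sys_gap_neg[OF sol, of x] unfolding tilted_def by simp
    then show ?thesis by (simp add: algebra_simps)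
  qed
  then show ?thesis
    using Theta_sum[OF assms(1)] Theta_sum[OF tilted_in_Theta[OF assms]]
    by (simp add: sum.distrib sum_subtractf sum_distrib_left[symmetric] sum_distrib_right[symmetric])
qed

lemma mean_le_of_solves_sys:
  assumes "p \<in> Theta" and sol: "solves_sys p v \<delta> mu lam"
    and "q \<in> Theta" and KL_q: "KL p q \<le> \<delta>"
  shows "(\<Sum>x\<in>UNIV. q x * v x) \<le> mu"
proof -
  define b where "b x = 1 + (v x - mu) / lam" for x
  have lam: "lam < 0" by (rule solves_sys_lam_neg[OF sol])
  have "b x = (lam + v x - mu) / lam" for x
    unfolding b_def using lam by (simp add: field_simps)
  then have b_pos: "b x > 0" for x
    using solves_sys_gap_neg[OF sol, of x] lam by (simp add: divide_neg_neg)
  have "(\<Sum>x\<in>UNIV. p x * ln (b x)) = \<delta>"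
    using sol unfolding solves_sys_def b_def by simp
  then have "\<delta> - KL p q \<le> (\<Sum>x\<in>UNIV. q x * b x) - 1"
    using sum_ln_weight_minus_KL_le[of p q b, OF Theta_pos[OF assms(1)] Theta_sum[OF assms(1)]
        Theta_pos[OF assms(3)] b_pos] by simp
  also have "(\<Sum>x\<in>UNIV. q x * b x) = 1 + ((\<Sum>x\<in>UNIV. q x * v x) - mu) / lam"
    unfolding b_def using Theta_sum[OF assms(3)]
    by (simp add: algebra_simps sum.distrib sum_divide_distrib[symmetric] sum_subtractf
        diff_divide_distrib sum_distrib_left[symmetric] sum_distrib_right[symmetric])
  finally have "((\<Sum>x\<in>UNIV. q x * v x) - mu) / lam \<ge> 0"
    using KL_q by linarith
  then show ?thesis
    using lam by (simp add: zero_le_divide_iff)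
qed

lemma Cval_eq_of_solves_sys:
  assumes "p \<in> Theta" and "solves_sys p v \<delta> mu lam"
  shows "Cval p v \<delta> = mu"
  unfolding Cval_def
proof (rule cSup_eq_maximum)
  show "mu \<in> {\<Sum>x\<in>UNIV. q x * v x | q. q \<in> Theta \<and> KL p q \<le> \<delta>}"
    using tilted_in_Theta[OF assms] KL_tilted[OF assms] mean_tilted[OF assms] by force
qed (use mean_le_of_solves_sys[OF assms] in auto)

subsection \<open>Existence of a solution\<close>

definition resolvent :: "('a::finite \<Rightarrow> real) \<Rightarrow> ('a \<Rightarrow> real) \<Rightarrow> real \<Rightarrow> real" where
  "resolvent p v s = (\<Sum>x\<in>UNIV. p x / (s - v x))"

text \<open>\<open>kl_profile p v s = KL p q\<^sub>s\<close> for the distribution \<open>q\<^sub>s \<propto> p / (s - v)\<close>.\<close>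

definition kl_profile :: "('a::finite \<Rightarrow> real) \<Rightarrow> ('a \<Rightarrow> real) \<Rightarrow> real \<Rightarrow> real" where
  "kl_profile p v s = (\<Sum>x\<in>UNIV. p x * ln (s - v x)) + ln (resolvent p v s)"

lemma resolvent_ge_term:
  assumes "p \<in> Theta" and "\<And>x. v x < s"
  shows "p x / (s - v x) \<le> resolvent p v s"
proof -
  have "0 \<le> p y / (s - v y)" for y
    using Theta_pos[OF assms(1), of y] assms(2)[of y] by simp
  then show ?thesis
    unfolding resolvent_def by (intro member_le_sum) auto
qed

lemma resolvent_pos:
  assumes "p \<in> Theta" and "\<And>x. v x < s"
  shows "resolvent p v s > 0"
proof -
  have "0 < p y / (s - v y)" for y
    using Theta_pos[OF assms(1), of y] assms(2)[of y] by simp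
  then show ?thesis
    unfolding resolvent_def by (intro sum_pos) auto
qed

lemma resolvent_lt:
  assumes "p \<in> Theta" and v_le: "\<And>x. v x \<le> V" and x1: "v x1 < V" and "V < s"
  shows "resolvent p v s < 1 / (s - V)"
proof -
  have "resolvent p v s < (\<Sum>x\<in>UNIV. p x / (s - V))"
    unfolding resolvent_def
  proof (rule sum_strict_mono_ex1)
    have "p x / (s - v x) \<le> p x / (s - V)" for x
      using Theta_pos[OF assms(1), of x] v_le[of x] \<open>V < s\<close> by (intro divide_left_mono) auto
    then show "\<forall>x\<in>UNIV. p x / (s - v x) \<le> p x / (s - V)" ..
    have "p x1 / (s - v x1) < p x1 / (s - V)"
      using Theta_pos[OF assms(1), of x1] x1 \<open>V < s\<close> by (intro divide_strict_left_mono) auto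
    then show "\<exists>x\<in>UNIV. p x / (s - v x) < p x / (s - V)" by blast
  qed simp
  also have "\<dots> = 1 / (s - V)"
    by (simp add: sum_divide_distrib[symmetric] Theta_sum[OF assms(1)])
  finally show ?thesis .
qed

lemma kl_profile_le:
  assumes "p \<in> Theta" and v_ge: "\<And>x. m \<le> v x" and v_le: "\<And>x. v x \<le> V" and "V < s"
  shows "kl_profile p v s \<le> ln (s - m) - ln (s - V)"
proof -
  have gap: "s - v x > 0" for x using v_le[of x] \<open>V < s\<close> by linarith
  have "ln (s - v x) \<le> ln (s - m)" for x
    using gap[of x] v_ge[of x] by simp
  then have "(\<Sum>x\<in>UNIV. p x * ln (s - v x)) \<le> (\<Sum>x\<in>UNIV. p x * ln (s - m))"
    using Theta_pos[OF assms(1)] by (intro sum_mono mult_left_mono) (auto simp: less_imp_le)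
  also have "\<dots> = ln (s - m)"
    by (simp add: sum_distrib_right[symmetric] Theta_sum[OF assms(1)])
  finally have first: "(\<Sum>x\<in>UNIV. p x * ln (s - v x)) \<le> ln (s - m)" .
  have "p x / (s - v x) \<le> p x / (s - V)" for x
    using Theta_pos[OF assms(1), of x] v_le[of x] \<open>V < s\<close> by (intro divide_left_mono) auto
  then have "resolvent p v s \<le> (\<Sum>x\<in>UNIV. p x / (s - V))"
    unfolding resolvent_def by (rule sum_mono)
  also have "\<dots> = 1 / (s - V)"
    by (simp add: sum_divide_distrib[symmetric] Theta_sum[OF assms(1)])
  finally have "ln (resolvent p v s) \<le> ln (1 / (s - V))"
    using resolvent_pos[OF assms(1), of v s] gap by (intro ln_mono) simp_all
  also have "\<dots> = - ln (s - V)"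
    using \<open>V < s\<close> by (simp add: ln_div)
  finally have "ln (resolvent p v s) \<le> - ln (s - V)" .
  with first show ?thesis unfolding kl_profile_def by linarith
qed

lemma kl_profile_ge:
  assumes "p \<in> Theta" and v_le: "\<And>x. v x \<le> V" and x0: "v x0 = V" and x1: "v x1 < V"
    and "V < s"
  shows "kl_profile p v s \<ge> ln (p x0) + p x1 * (ln (V - v x1) - ln (s - V))"
proof -
  have gap: "s - v x > 0" for x using v_le[of x] \<open>V < s\<close> by linarith
  have "ln (s - V) \<le> ln (s - v x)" for x
    using gap[of x] v_le[of x] \<open>V < s\<close> by simp
  then have "p x1 * (ln (s - v x1) - ln (s - V)) \<le> (\<Sum>x\<in>UNIV. p x * (ln (s - v x) - ln (s - V)))"
    using Theta_pos[OF assms(1)] by (intro member_le_sum mult_nonneg_nonneg) (auto simp: less_imp_le)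
  also have "\<dots> = (\<Sum>x\<in>UNIV. p x * ln (s - v x)) - ln (s - V)"
    by (simp add: right_diff_distrib sum_subtractf sum_distrib_right[symmetric]
        Theta_sum[OF assms(1)])
  finally have first: "p x1 * (ln (V - v x1) - ln (s - V))
      \<le> (\<Sum>x\<in>UNIV. p x * ln (s - v x)) - ln (s - V)"
    using Theta_pos[OF assms(1), of x1] x1 \<open>V < s\<close>
    by (smt (verit) ln_less_cancel_iff mult_left_mono)
  have "ln (p x0) - ln (s - V) = ln (p x0 / (s - v x0))"
    using Theta_pos[OF assms(1), of x0] x0 \<open>V < s\<close> by (simp add: ln_div)
  also have "\<dots> \<le> ln (resolvent p v s)"
    using resolvent_ge_term[OF assms(1), of v s x0] Theta_pos[OF assms(1), of x0] gap
    by (intro ln_mono) simp_all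
  finally show ?thesis using first unfolding kl_profile_def by linarith
qed

lemma continuous_on_kl_profile:
  assumes "p \<in> Theta" and v_le: "\<And>x. v x \<le> V"
  shows "continuous_on {V<..} (kl_profile p v)"
proof -
  have below: "v x < s" if "s \<in> {V<..}" for s x
    using v_le[of x] that by auto
  then have "s - v x \<noteq> 0" and "resolvent p v s \<noteq> 0" if "s \<in> {V<..}" for s x
    using resolvent_pos[OF assms(1), of v s] that by (auto simp: less_imp_neq[symmetric])
  then show ?thesis
    unfolding kl_profile_def resolvent_def by (intro continuous_intros) auto
qed

lemma kl_profile_root:
  assumes "p \<in> Theta" and "\<delta> > 0"
    and v_le: "\<And>x. v x \<le> V" and x0: "v x0 = V" and x1: "v x1 < V"
  shows "\<exists>s > V. kl_profile p v s = \<delta>"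
proof -
  have p1: "p x1 > 0" using Theta_pos[OF assms(1)] .
  define K where "K = (ln (p x0) + p x1 * ln (V - v x1) - \<delta>) / p x1"
  define s1 where "s1 = V + exp (K - 1)"
  have s1V: "V < s1" unfolding s1_def by simp
  have "p x1 * ln (s1 - V) < p x1 * K"
    using p1 unfolding s1_def by simp
  also have "p x1 * K = ln (p x0) + p x1 * ln (V - v x1) - \<delta>"
    using p1 unfolding K_def by simp
  finally have D1: "kl_profile p v s1 > \<delta>"
    using kl_profile_ge[OF assms(1) v_le x0 x1 s1V] by (simp add: algebra_simps)
  \<comment> \<open>for large \<open>s\<close>, \<open>(s - m)/(s - V) < e\<^sup>\<delta>\<close>\<close>
  define m where "m = Min (range v)"
  define e where "e = exp \<delta>"
  have e1: "e > 1" unfolding e_def using assms(2) by simp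
  define s2 where "s2 = max s1 ((e * V - m) / (e - 1) + 1)"
  have s12: "s1 \<le> s2" and s2V: "V < s2" unfolding s2_def using s1V by auto
  have "(e * V - m) / (e - 1) + 1 \<le> s2" unfolding s2_def by simp
  then have "e * V - m + (e - 1) \<le> s2 * (e - 1)"
    using e1 by (simp add: field_simps)
  then have "s2 - m < e * (s2 - V)"
    using e1 by (simp add: algebra_simps)
  moreover have "s2 - m > 0" using s2V Min_range_le[of v x0] x0 unfolding m_def by linarith
  ultimately have "ln (s2 - m) < ln (e * (s2 - V))" by simp
  also have "\<dots> = \<delta> + ln (s2 - V)" unfolding e_def using s2V by (simp add: ln_mult)
  finally have D2: "kl_profile p v s2 < \<delta>"
    using kl_profile_le[where v = v, OF assms(1) Min_range_le v_le s2V] unfolding m_def by linarith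
  have "continuous_on {s1..s2} (kl_profile p v)"
    by (rule continuous_on_subset[OF continuous_on_kl_profile[OF assms(1) v_le]])
      (use s1V in auto)
  then obtain s where "s1 \<le> s" "kl_profile p v s = \<delta>"
    using IVT2'[of "kl_profile p v" s2 \<delta> s1] D1 D2 s12 by auto
  then show ?thesis using s1V by (intro exI[of _ s]) auto
qed

lemma weighted_AM_HM_strict:
  fixes p w :: "'a::finite \<Rightarrow> real"
  assumes p: "\<And>x. p x > 0" and p_sum: "(\<Sum>x\<in>UNIV. p x) = 1"
    and w: "\<And>x. w x > 0" and "w x0 \<noteq> w x1"
  shows "(\<Sum>x\<in>UNIV. p x * w x) * (\<Sum>x\<in>UNIV. p x / w x) > 1"
proof -
  define A where "A = (\<Sum>x\<in>UNIV. p x * w x)"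
  define R where "R = (\<Sum>x\<in>UNIV. p x / w x)"
  have A_pos: "A > 0" unfolding A_def using p w by (intro sum_pos) auto
  obtain y where "w y \<noteq> A" using \<open>w x0 \<noteq> w x1\<close> by metis
  then have "0 < p y * (w y - A)\<^sup>2 / w y" using p[of y] w[of y] by simp
  moreover have "0 \<le> p x * (w x - A)\<^sup>2 / w x" for x
    using p[of x] w[of x] by simp
  ultimately have "0 < (\<Sum>x\<in>UNIV. p x * (w x - A)\<^sup>2 / w x)"
    by (intro sum_pos2[of UNIV y]) auto
  also have "\<dots> = (\<Sum>x\<in>UNIV. p x * w x - 2 * A * p x + A\<^sup>2 * (p x / w x))"
    using w by (intro sum.cong) (auto simp: field_simps power2_eq_square less_imp_neq[symmetric])
  also have "\<dots> = A - 2 * A * 1 + A\<^sup>2 * R"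
    unfolding sum.distrib sum_subtractf sum_distrib_left[symmetric] p_sum
    by (simp only: A_def R_def)
  also have "\<dots> = A * (A * R - 1)"
    by (simp add: power2_eq_square algebra_simps)
  finally show ?thesis
    using A_pos unfolding A_def[symmetric] R_def[symmetric] by (simp add: zero_less_mult_iff)
qed

lemma solves_sys_of_kl_profile_root:
  assumes "p \<in> Theta" and "\<exists>x1 x2. v x1 \<noteq> v x2"
    and sV: "Max (range v) < s" and root: "kl_profile p v s = \<delta>"
  defines "h \<equiv> 1 / resolvent p v s"
  shows "solves_sys p v \<delta> (s - h) (- h)"
  unfolding solves_sys_def
proof (intro conjI)
  let ?V = "Max (range v)" and ?R = "resolvent p v s"
  have gap: "s - v x > 0" for x using le_Max_range[of v x] sV by linarith
  have R: "?R > 0" using resolvent_pos[OF assms(1)] gap by simp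
  have "1 + (v x - (s - h)) / - h = (s - v x) * ?R" for x
    using R unfolding h_def by (simp add: field_simps)
  moreover have "p x * ln ((s - v x) * ?R) = p x * ln (s - v x) + p x * ln ?R" for x
    using ln_mult_pos[OF gap[of x] R] by (simp add: distrib_left)
  ultimately have "(\<Sum>x\<in>UNIV. p x * ln (1 + (v x - (s - h)) / - h))
      = (\<Sum>x\<in>UNIV. p x * ln (s - v x) + p x * ln ?R)"
    by simp
  also have "\<dots> = kl_profile p v s"
    by (simp add: kl_profile_def sum.distrib sum_distrib_right[symmetric] Theta_sum[OF assms(1)])
  finally show "(\<Sum>x\<in>UNIV. p x * ln (1 + (v x - (s - h)) / - h)) = \<delta>"
    using root by simp
  have "p x * (- h / (- h + v x - (s - h))) = h * (p x / (s - v x))" for x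
    using gap[of x] by (simp add: field_simps)
  then have "(\<Sum>x\<in>UNIV. p x * (- h / (- h + v x - (s - h)))) = h * ?R"
    unfolding resolvent_def sum_distrib_left by (rule sum.cong[OF refl])
  then show "(\<Sum>x\<in>UNIV. p x * (- h / (- h + v x - (s - h)))) = 1"
    using R by (simp add: h_def)
  obtain x0 x1 where "v x0 \<noteq> v x1" using assms(2) by blast
  then have "s - v x0 \<noteq> s - v x1" by simp
  from weighted_AM_HM_strict[OF Theta_pos[OF assms(1)] Theta_sum[OF assms(1)] gap this]
  have "(s - (\<Sum>x\<in>UNIV. p x * v x)) * ?R > 1"
    by (simp add: right_diff_distrib sum_subtractf sum_distrib_right[symmetric]
        Theta_sum[OF assms(1)] resolvent_def)
  then show "(\<Sum>x\<in>UNIV. p x * v x) < s - h"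
    using R unfolding h_def by (simp add: field_simps)
  obtain x1 where "v x1 < ?V" using nonconstant_below_Max[OF assms(2)] ..
  with resolvent_lt[where v = v, OF assms(1) le_Max_range this sV] sV have "?R * (s - ?V) < 1"
    by (simp add: field_simps)
  then show "s - h < ?V"
    using R unfolding h_def by (simp add: field_simps)
  show "- h < s - h - ?V" using sV by linarith
qed

theorem theorem2:
  fixes p v :: "'a::finite \<Rightarrow> real" and \<delta> :: real
  assumes "p \<in> Theta" and "\<delta> > 0" and "\<exists>x1 x2. v x1 \<noteq> v x2"
  shows "(\<exists>mu lam. solves_sys p v \<delta> mu lam) \<and>
         (\<forall>mu lam. solves_sys p v \<delta> mu lam \<longrightarrow> Cval p v \<delta> = mu)"
proof
  obtain x0 where x0: "v x0 = Max (range v)" using Max_range_attained ..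
  obtain x1 where x1: "v x1 < Max (range v)" using nonconstant_below_Max[OF assms(3)] ..
  obtain s where "Max (range v) < s" and "kl_profile p v s = \<delta>"
    using kl_profile_root[where v = v, OF assms(1,2) le_Max_range x0 x1] by blast
  then show "\<exists>mu lam. solves_sys p v \<delta> mu lam"
    using solves_sys_of_kl_profile_root[OF assms(1,3)] by blast
  show "\<forall>mu lam. solves_sys p v \<delta> mu lam \<longrightarrow> Cval p v \<delta> = mu"
    using Cval_eq_of_solves_sys[OF assms(1)] by blast
qed

end
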